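(* Let $\mu>0$, $u_a\in\mathbb{R}$, $\alpha_->0$, $\alpha_+>0$, $u_->u_+$, $\sigma_0\in(u_+,u_-)$, $\omega_0\ge0$. Set $\alpha_l\equiv\alpha_-$, $\alpha_r\equiv\alpha_+$, $u_l(t)=u_a+(u_--u_a)e^{-\mu t}$, $u_r(t)=u_a+(u_+-u_a)e^{-\mu t}$. Then the initial value problem $$\frac{d\omega}{dt}=(\alpha_r-\alpha_l)\sigma-(\alpha_ru_r-\alpha_lu_l),\quad \frac{d(\omega\sigma)}{dt}=(\alpha_ru_r-\alpha_lu_l)\sigma-(\alpha_ru_r^2-\alpha_lu_l^2)+\mu(u_a-\sigma)\omega,$$ $$\omega(0)=\omega_0,\qquad \sigma(0)\omega(0)=\sigma_0\omega_0,$$ has a solution $(\omega,\sigma)\in\mathcal{C}^1([0,\infty))^2$ satisfying Lax's entropy condition $u_r(t)<\sigma(t)<u_l(t)$ for all $t\ge0$. *)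

theory Defs
  imports Complex_Main
begin

definition ustate :: "real \<Rightarrow> real \<Rightarrow> real \<Rightarrow> real \<Rightarrow> real" where
  "ustate ua u0 \<mu> t = ua + (u0 - ua) * exp (- \<mu> * t)"

end

theory Submission
  imports Defs
begin

text \<open>
  The change of time \<open>s = (1 - exp (-\<mu> t)) / \<mu>\<close> together with \<open>\<sigma> = u\<^sub>a + exp (-\<mu> t) Y\<close> removes
  the relaxation terms and leaves an autonomous system for \<open>W = \<omega>\<close> and \<open>Y\<close>, in which the two
  states are the constants \<open>a = u\<^sub>+ - u\<^sub>a\<close> and \<open>b = u\<^sub>- - u\<^sub>a\<close>. Write \<open>\<alpha>\<^sub>+ = k\<^sup>2\<close>, \<open>\<alpha>\<^sub>- = m\<^sup>2\<close> and
  \<open>P = W (Y - a)\<close>, \<open>Q = W (b - Y)\<close>. Then \<open>P' = m\<^sup>2 (b - a) Q / W\<close> and \<open>Q' = k\<^sup>2 (b - a) P / W\<close>, so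
  \<open>k\<^sup>2 P\<^sup>2 - m\<^sup>2 Q\<^sup>2\<close> is conserved while \<open>k\<^sup>2 P + m\<^sup>2 Q = W W'\<close> grows linearly. This determines
  \<open>W\<^sup>2\<close> as a quadratic polynomial and \<open>P\<close>, \<open>Q\<close> in closed form, and Lax's condition is just
  \<open>P, Q > 0\<close>. When \<open>\<omega>\<^sub>0 = 0\<close> only \<open>\<sigma>(0) \<omega>(0) = 0\<close> is prescribed, and the shock starts at the
  equilibrium of \<open>Y\<close> and stays there.
\<close>

definition lax_shock_solution ::
  "real \<Rightarrow> real \<Rightarrow> real \<Rightarrow> real \<Rightarrow> real \<Rightarrow> real \<Rightarrow> real \<Rightarrow> real \<Rightarrow>
   (real \<Rightarrow> real) \<Rightarrow> (real \<Rightarrow> real) \<Rightarrow> (real \<Rightarrow> real) \<Rightarrow> (real \<Rightarrow> real) \<Rightarrow> bool"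
where
  "lax_shock_solution \<mu> ua \<alpha>m \<alpha>p um up \<sigma>0 \<omega>0 \<omega> \<sigma> \<omega>' \<sigma>' \<longleftrightarrow>
    (\<forall>t\<ge>0. (\<omega> has_real_derivative \<omega>' t) (at t within {0..})
            \<and> (\<sigma> has_real_derivative \<sigma>' t) (at t within {0..}))
    \<and> continuous_on {0..} \<omega>' \<and> continuous_on {0..} \<sigma>'
    \<and> (\<forall>t\<ge>0. \<omega>' t = (\<alpha>p - \<alpha>m) * \<sigma> t
                 - (\<alpha>p * ustate ua up \<mu> t - \<alpha>m * ustate ua um \<mu> t))
    \<and> (\<forall>t\<ge>0. ((\<lambda>s. \<omega> s * \<sigma> s) has_real_derivative
           ((\<alpha>p * ustate ua up \<mu> t - \<alpha>m * ustate ua um \<mu> t) * \<sigma> t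
            - (\<alpha>p * (ustate ua up \<mu> t)\<^sup>2 - \<alpha>m * (ustate ua um \<mu> t)\<^sup>2)
            + \<mu> * (ua - \<sigma> t) * \<omega> t)) (at t within {0..}))
    \<and> \<omega> 0 = \<omega>0 \<and> \<sigma> 0 * \<omega> 0 = \<sigma>0 * \<omega>0
    \<and> (\<forall>t\<ge>0. ustate ua up \<mu> t < \<sigma> t \<and> \<sigma> t < ustate ua um \<mu> t)"

definition reduced_shock_solution ::
  "real \<Rightarrow> real \<Rightarrow> real \<Rightarrow> real \<Rightarrow>
   (real \<Rightarrow> real) \<Rightarrow> (real \<Rightarrow> real) \<Rightarrow> (real \<Rightarrow> real) \<Rightarrow> (real \<Rightarrow> real) \<Rightarrow> bool"
where
  "reduced_shock_solution \<alpha>m \<alpha>p a b W Y W' Y' \<longleftrightarrow>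
    (\<forall>s\<ge>0. (W has_real_derivative W' s) (at s within {0..})
            \<and> (Y has_real_derivative Y' s) (at s within {0..}))
    \<and> continuous_on {0..} W' \<and> continuous_on {0..} Y'
    \<and> (\<forall>s\<ge>0. W' s = \<alpha>p * (Y s - a) + \<alpha>m * (b - Y s))
    \<and> (\<forall>s\<ge>0. W s * Y' s = \<alpha>m * (b - Y s)\<^sup>2 - \<alpha>p * (Y s - a)\<^sup>2)
    \<and> (\<forall>s\<ge>0. a < Y s \<and> Y s < b)"

definition time_change :: "real \<Rightarrow> real \<Rightarrow> real" where
  "time_change \<mu> t = (1 - exp (- \<mu> * t)) / \<mu>"

lemma time_change_0 [simp]: "time_change \<mu> 0 = 0"
  by (simp add: time_change_def)

lemma time_change_nonneg: "\<mu> > 0 \<Longrightarrow> t \<ge> 0 \<Longrightarrow> time_change \<mu> t \<ge> 0"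
  by (simp add: time_change_def)

lemma has_real_derivative_time_change:
  "\<mu> \<noteq> 0 \<Longrightarrow> (time_change \<mu> has_real_derivative exp (- \<mu> * t)) (at t within S)"
  unfolding time_change_def by (auto intro!: derivative_eq_intros simp: field_simps)

lemma has_real_derivative_comp_time_change:
  assumes "\<mu> > 0" and "t \<ge> 0"
    and F: "\<And>s. s \<ge> 0 \<Longrightarrow> (F has_real_derivative F' s) (at s within {0..})"
  shows "((\<lambda>t. F (time_change \<mu> t)) has_real_derivative F' (time_change \<mu> t) * exp (- \<mu> * t))
           (at t within {0..})"
proof -
  have "time_change \<mu> ` {0..} \<subseteq> {0..}"
    using assms(1) time_change_nonneg by auto
  then have "(F has_real_derivative F' (time_change \<mu> t)) (at (time_change \<mu> t) within time_change \<mu> ` {0..})"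
    using DERIV_subset F time_change_nonneg assms(1,2) by blast
  from DERIV_image_chain[OF this has_real_derivative_time_change] assms(1)
  show ?thesis by (simp add: o_def)
qed

lemma continuous_on_comp_time_change:
  assumes "\<mu> > 0" and "continuous_on {0..} F"
  shows "continuous_on {0..} (\<lambda>t. F (time_change \<mu> t))"
proof -
  have "continuous_on {0..} (time_change \<mu>)"
    using assms(1) by (intro DERIV_continuous_on[OF has_real_derivative_time_change]) simp
  moreover have "time_change \<mu> ` {0..} \<subseteq> {0..}"
    using assms(1) time_change_nonneg by auto
  ultimately show ?thesis
    using continuous_on_compose2[OF assms(2)] by blast
qed

lemma lax_shock_solution_of_reduced:
  fixes \<mu> ua \<alpha>m \<alpha>p um up \<sigma>0 \<omega>0 :: real
  assumes "\<mu> > 0"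
    and red: "reduced_shock_solution \<alpha>m \<alpha>p (up - ua) (um - ua) W Y W' Y'"
    and init: "W 0 = \<omega>0" "W 0 * Y 0 = \<omega>0 * (\<sigma>0 - ua)"
  shows "lax_shock_solution \<mu> ua \<alpha>m \<alpha>p um up \<sigma>0 \<omega>0
           (\<lambda>t. W (time_change \<mu> t))
           (\<lambda>t. ua + exp (- \<mu> * t) * Y (time_change \<mu> t))
           (\<lambda>t. W' (time_change \<mu> t) * exp (- \<mu> * t))
           (\<lambda>t. exp (- \<mu> * t) * (Y' (time_change \<mu> t) * exp (- \<mu> * t))
                - \<mu> * exp (- \<mu> * t) * Y (time_change \<mu> t))"
    (is "lax_shock_solution _ _ _ _ _ _ _ _ ?\<omega> ?\<sigma> ?\<omega>' ?\<sigma>'")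
proof -
  let ?\<tau> = "time_change \<mu>"
  have \<tau>: "?\<tau> t \<ge> 0" if "t \<ge> 0" for t
    using time_change_nonneg assms(1) that .
  have dW: "\<And>s. s \<ge> 0 \<Longrightarrow> (W has_real_derivative W' s) (at s within {0..})"
   and dY: "\<And>s. s \<ge> 0 \<Longrightarrow> (Y has_real_derivative Y' s) (at s within {0..})"
   and cW': "continuous_on {0..} W'" and cY': "continuous_on {0..} Y'"
   and eW: "\<And>s. s \<ge> 0 \<Longrightarrow> W' s = \<alpha>p * (Y s - (up - ua)) + \<alpha>m * ((um - ua) - Y s)"
   and eY: "\<And>s. s \<ge> 0 \<Longrightarrow> W s * Y' s = \<alpha>m * ((um - ua) - Y s)\<^sup>2 - \<alpha>p * (Y s - (up - ua))\<^sup>2"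
   and bY: "\<And>s. s \<ge> 0 \<Longrightarrow> up - ua < Y s \<and> Y s < um - ua"
    using red by (auto simp: reduced_shock_solution_def)
  have d\<omega>: "(?\<omega> has_real_derivative ?\<omega>' t) (at t within {0..})" if "t \<ge> 0" for t
    using has_real_derivative_comp_time_change[OF assms(1) that dW] .
  have d\<sigma>: "(?\<sigma> has_real_derivative ?\<sigma>' t) (at t within {0..})" if "t \<ge> 0" for t
    using has_real_derivative_comp_time_change[OF assms(1) that dY]
    by (auto intro!: derivative_eq_intros)
  have "continuous_on {0..} Y"
    using dY by (auto intro!: DERIV_continuous_on)
  then have c\<tau>: "continuous_on {0..} (\<lambda>t. Y (?\<tau> t))" "continuous_on {0..} (\<lambda>t. W' (?\<tau> t))"
    "continuous_on {0..} (\<lambda>t. Y' (?\<tau> t))"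
    using cW' cY' continuous_on_comp_time_change[OF assms(1)] by blast+
  have c: "continuous_on {0..} ?\<omega>'" "continuous_on {0..} ?\<sigma>'"
    by (intro continuous_intros c\<tau>)+
  have e\<omega>: "?\<omega>' t = (\<alpha>p - \<alpha>m) * ?\<sigma> t - (\<alpha>p * ustate ua up \<mu> t - \<alpha>m * ustate ua um \<mu> t)"
    if "t \<ge> 0" for t
    unfolding eW[OF \<tau>[OF that]] by (simp add: ustate_def algebra_simps)
  have e\<sigma>: "((\<lambda>s. ?\<omega> s * ?\<sigma> s) has_real_derivative
           ((\<alpha>p * ustate ua up \<mu> t - \<alpha>m * ustate ua um \<mu> t) * ?\<sigma> t
            - (\<alpha>p * (ustate ua up \<mu> t)\<^sup>2 - \<alpha>m * (ustate ua um \<mu> t)\<^sup>2)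
            + \<mu> * (ua - ?\<sigma> t) * ?\<omega> t)) (at t within {0..})" if "t \<ge> 0" for t
  proof -
    have "?\<omega> t * ?\<sigma>' t + ?\<omega>' t * ?\<sigma> t
        = (\<alpha>p * ustate ua up \<mu> t - \<alpha>m * ustate ua um \<mu> t) * ?\<sigma> t
            - (\<alpha>p * (ustate ua up \<mu> t)\<^sup>2 - \<alpha>m * (ustate ua um \<mu> t)\<^sup>2)
            + \<mu> * (ua - ?\<sigma> t) * ?\<omega> t"
      using eY[OF \<tau>[OF that]] unfolding eW[OF \<tau>[OF that]] ustate_def by algebra
    with DERIV_mult'[OF d\<omega>[OF that] d\<sigma>[OF that]] show ?thesis by simp
  qed
  have b\<sigma>: "ustate ua up \<mu> t < ?\<sigma> t \<and> ?\<sigma> t < ustate ua um \<mu> t" if "t \<ge> 0" for t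
    using bY[OF \<tau>[OF that]] by (simp add: ustate_def mult.commute[of _ "exp _"])
  show ?thesis
    unfolding lax_shock_solution_def
    using d\<omega> d\<sigma> c e\<omega> e\<sigma> b\<sigma> init by (simp add: algebra_simps)
qed

lemma abs_diff_squares_less: "x > 0 \<Longrightarrow> y > 0 \<Longrightarrow> \<bar>x\<^sup>2 - y\<^sup>2\<bar> < (x + y :: real)\<^sup>2"
  unfolding abs_less_iff power2_eq_square
  by (auto simp: algebra_simps intro: add_pos_pos mult_pos_pos)

locale reduced_shock_ivp =
  fixes k m a b y0 \<omega>0 :: real
  assumes k_pos: "k > 0" and m_pos: "m > 0"
    and y0_bounds: "a < y0" "y0 < b" and \<omega>0_pos: "\<omega>0 > 0"
begin

text \<open>
  On a solution \<open>F = k\<^sup>2 P + m\<^sup>2 Q\<close>, \<open>C = k\<^sup>2 P\<^sup>2 - m\<^sup>2 Q\<^sup>2\<close> and \<open>U = k P + m Q\<close>; the definitions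
  below solve these relations for \<open>P\<close> and \<open>Q\<close>, using \<open>k P - m Q = C / U\<close>.
\<close>

definition "\<kappa> = k * m * (b - a)"
definition "F0 = \<omega>0 * (k\<^sup>2 * (y0 - a) + m\<^sup>2 * (b - y0))"
definition "F s = F0 + \<kappa>\<^sup>2 * s"
definition "W s = sqrt (\<omega>0\<^sup>2 + 2 * F0 * s + \<kappa>\<^sup>2 * s\<^sup>2)"
definition "C = \<omega>0\<^sup>2 * (k\<^sup>2 * (y0 - a)\<^sup>2 - m\<^sup>2 * (b - y0)\<^sup>2)"
definition "U s = (F s + \<kappa> * W s) / (k + m)"
definition "P s = (U s + C / U s) / (2 * k)"
definition "Q s = (U s - C / U s) / (2 * m)"
definition "Y s = a + P s / W s"

lemma F0_pos: "F0 > 0"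
  using k_pos m_pos y0_bounds \<omega>0_pos by (simp add: F0_def add_pos_pos)

lemma W_sq: "s \<ge> 0 \<Longrightarrow> (W s)\<^sup>2 = \<omega>0\<^sup>2 + 2 * F0 * s + \<kappa>\<^sup>2 * s\<^sup>2"
  using F0_pos by (simp add: W_def)

lemma W_ge: "s \<ge> 0 \<Longrightarrow> W s \<ge> \<omega>0"
  using F0_pos \<omega>0_pos real_sqrt_le_mono[of "\<omega>0\<^sup>2" "\<omega>0\<^sup>2 + 2 * F0 * s + \<kappa>\<^sup>2 * s\<^sup>2"]
  by (simp add: W_def)

lemma W_pos: "s \<ge> 0 \<Longrightarrow> W s > 0"
  using W_ge \<omega>0_pos by force

lemma W_0: "W 0 = \<omega>0"
  using \<omega>0_pos by (simp add: W_def)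

lemma W_F_identity: "s \<ge> 0 \<Longrightarrow> \<kappa>\<^sup>2 * (W s)\<^sup>2 - (F s)\<^sup>2 = (m\<^sup>2 - k\<^sup>2) * C"
  unfolding W_sq F_def F0_def C_def \<kappa>_def by algebra

lemma U_eq: "(k + m) * U s = F s + \<kappa> * W s"
  using k_pos m_pos by (simp add: U_def)

lemma U_times: "s \<ge> 0 \<Longrightarrow> U s * (\<kappa> * W s - F s) = (m - k) * C"
proof -
  assume "s \<ge> 0"
  have "(k + m) * (U s * (\<kappa> * W s - F s)) = (F s + \<kappa> * W s) * (\<kappa> * W s - F s)"
    by (metis U_eq mult.assoc)
  also have "\<dots> = (k + m) * ((m - k) * C)"
    using W_F_identity[OF \<open>s \<ge> 0\<close>] by algebra
  finally show ?thesis
    using k_pos m_pos by simp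
qed

lemma U_0: "U 0 = \<omega>0 * (k * (y0 - a) + m * (b - y0))"
proof -
  have "F 0 + \<kappa> * W 0 = (k + m) * (\<omega>0 * (k * (y0 - a) + m * (b - y0)))"
    unfolding F_def F0_def W_0 \<kappa>_def by algebra
  then show ?thesis
    using k_pos m_pos by (simp add: U_def)
qed

lemma U_ge: "s \<ge> 0 \<Longrightarrow> U 0 \<le> U s"
  using W_ge[of s] W_0 k_pos m_pos y0_bounds
  unfolding U_def F_def \<kappa>_def
  by (intro divide_right_mono add_mono mult_left_mono) auto

lemma U_0_pos: "U 0 > 0"
  using \<omega>0_pos k_pos m_pos y0_bounds by (simp add: U_0 add_pos_pos)

lemma U_pos: "s \<ge> 0 \<Longrightarrow> U s > 0"
  using U_ge U_0_pos by (rule order.strict_trans2[rotated])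

lemma C_less_U_sq: "s \<ge> 0 \<Longrightarrow> \<bar>C\<bar> < (U s)\<^sup>2"
proof -
  assume "s \<ge> 0"
  have "C = (\<omega>0 * k * (y0 - a))\<^sup>2 - (\<omega>0 * m * (b - y0))\<^sup>2"
    unfolding C_def by algebra
  also have "\<bar>\<dots>\<bar> < (U 0)\<^sup>2"
    unfolding U_0 using \<omega>0_pos k_pos m_pos y0_bounds
    by (simp add: abs_diff_squares_less distrib_left mult.assoc)
  also have "\<dots> \<le> (U s)\<^sup>2"
    using U_ge[OF \<open>s \<ge> 0\<close>] U_0_pos by (intro power_mono) auto
  finally show ?thesis .
qed

lemma P_pos: "s \<ge> 0 \<Longrightarrow> P s > 0"
  using C_less_U_sq[of s] U_pos[of s] k_pos
  by (simp add: P_def field_simps power2_eq_square abs_less_iff)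

lemma Q_pos: "s \<ge> 0 \<Longrightarrow> Q s > 0"
  using C_less_U_sq[of s] U_pos[of s] m_pos
  by (simp add: Q_def field_simps power2_eq_square abs_less_iff)

lemma P_plus_Q: "s \<ge> 0 \<Longrightarrow> P s + Q s = (b - a) * W s"
proof -
  assume s: "s \<ge> 0"
  have "(2 * k * m * U s) * (P s + Q s) = (k + m) * U s * U s + (m - k) * C"
    using k_pos m_pos U_pos[OF s] by (simp add: P_def Q_def field_simps)
  also have "\<dots> = U s * ((k + m) * U s + (\<kappa> * W s - F s))"
    using U_times[OF s] by (simp add: algebra_simps)
  also have "\<dots> = (2 * k * m * U s) * ((b - a) * W s)"
    unfolding U_eq \<kappa>_def by (simp add: algebra_simps)
  finally show ?thesis
    using k_pos m_pos U_pos[OF s] by simp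
qed

lemma weighted_P_Q: "s \<ge> 0 \<Longrightarrow> k\<^sup>2 * P s + m\<^sup>2 * Q s = F s"
proof -
  assume s: "s \<ge> 0"
  have "(2 * U s) * (k\<^sup>2 * P s + m\<^sup>2 * Q s) = (k + m) * U s * U s - (m - k) * C"
    using k_pos m_pos U_pos[OF s] by (simp add: P_def Q_def field_simps power2_eq_square)
  also have "\<dots> = U s * ((k + m) * U s - (\<kappa> * W s - F s))"
    using U_times[OF s] by (simp add: algebra_simps)
  also have "\<dots> = (2 * U s) * F s"
    unfolding U_eq by (simp add: algebra_simps)
  finally show ?thesis
    using U_pos[OF s] by simp
qed

lemma Y_minus_a: "Y s - a = P s / W s"
  by (simp add: Y_def)

lemma b_minus_Y: "s \<ge> 0 \<Longrightarrow> b - Y s = Q s / W s"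
  using P_plus_Q[of s] W_pos[of s] by (simp add: Y_def field_simps)

lemma Y_bounds: "s \<ge> 0 \<Longrightarrow> a < Y s \<and> Y s < b"
  using P_pos[of s] Q_pos[of s] W_pos[of s] Y_minus_a[of s] b_minus_Y[of s]
  by (metis diff_gt_0_iff_gt divide_pos_pos)

lemma Y_0: "Y 0 = y0"
proof -
  have "C = U 0 * (\<omega>0 * k * (y0 - a) - \<omega>0 * m * (b - y0))"
    unfolding U_0 C_def by algebra
  then have "C / U 0 = \<omega>0 * k * (y0 - a) - \<omega>0 * m * (b - y0)"
    using U_0_pos by simp
  then have "U 0 + C / U 0 = 2 * k * (\<omega>0 * (y0 - a))"
    unfolding U_0 by (simp add: algebra_simps)
  then have "P 0 = \<omega>0 * (y0 - a)"
    using k_pos by (simp add: P_def)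
  then show ?thesis
    using \<omega>0_pos by (simp add: Y_def W_0)
qed

lemma W_has_derivative: "s \<ge> 0 \<Longrightarrow> (W has_real_derivative F s / W s) (at s)"
  using W_pos[of s] unfolding W_def F_def
  by (auto intro!: derivative_eq_intros simp: field_simps power2_eq_square)

lemma U_has_derivative: "s \<ge> 0 \<Longrightarrow> (U has_real_derivative \<kappa> * U s / W s) (at s)"
proof -
  assume s: "s \<ge> 0"
  have "((\<lambda>s. (F s + \<kappa> * W s) / (k + m)) has_real_derivative (\<kappa>\<^sup>2 + \<kappa> * (F s / W s)) / (k + m)) (at s)"
    using k_pos m_pos unfolding F_def
    by (auto intro!: derivative_eq_intros W_has_derivative[OF s, unfolded F_def])
  moreover have "(\<kappa>\<^sup>2 + \<kappa> * (F s / W s)) / (k + m) = \<kappa> * U s / W s"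
    using W_pos[OF s] k_pos m_pos by (simp add: U_def field_simps power2_eq_square)
  ultimately show ?thesis
    using k_pos m_pos by (simp add: U_def[abs_def])
qed

lemma P_has_derivative: "s \<ge> 0 \<Longrightarrow> (P has_real_derivative m\<^sup>2 * (b - a) * Q s / W s) (at s)"
  unfolding P_def[abs_def] using U_pos[of s] W_pos[of s] k_pos m_pos
  by (auto intro!: derivative_eq_intros U_has_derivative
           simp: Q_def \<kappa>_def field_simps power2_eq_square)

lemma Y_has_derivative:
  "s \<ge> 0 \<Longrightarrow> (Y has_real_derivative (m\<^sup>2 * (b - Y s)\<^sup>2 - k\<^sup>2 * (Y s - a)\<^sup>2) / W s) (at s)"
proof -
  assume s: "s \<ge> 0"
  have "(Y has_real_derivative
      (m\<^sup>2 * (b - a) * Q s / W s * W s - P s * (F s / W s)) / (W s * W s)) (at s)"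
    unfolding Y_def[abs_def] using W_pos[OF s]
    by (auto intro!: derivative_eq_intros P_has_derivative[OF s] W_has_derivative[OF s])
  moreover have "(m\<^sup>2 * (b - a) * Q s / W s * W s - P s * (F s / W s)) / (W s * W s)
      = (m\<^sup>2 * (Q s / W s)\<^sup>2 - k\<^sup>2 * (P s / W s)\<^sup>2) / W s"
    using W_pos[OF s] P_plus_Q[OF s, symmetric] weighted_P_Q[OF s, symmetric]
    by (simp add: field_simps power2_eq_square) algebra
  ultimately show ?thesis
    unfolding Y_minus_a b_minus_Y[OF s] by simp
qed

lemma explicit_reduced_shock_solution:
  "reduced_shock_solution (m\<^sup>2) (k\<^sup>2) a b W Y
     (\<lambda>s. k\<^sup>2 * (Y s - a) + m\<^sup>2 * (b - Y s))
     (\<lambda>s. (m\<^sup>2 * (b - Y s)\<^sup>2 - k\<^sup>2 * (Y s - a)\<^sup>2) / W s)"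
proof -
  have dW: "(W has_real_derivative k\<^sup>2 * (Y s - a) + m\<^sup>2 * (b - Y s)) (at s)" if "s \<ge> 0" for s
    using W_has_derivative[OF that] W_pos[OF that] weighted_P_Q[OF that]
    unfolding Y_minus_a b_minus_Y[OF that] by (simp add: field_simps)
  have cY: "continuous_on {0..} Y"
    by (rule DERIV_continuous_on, rule has_field_derivative_at_within, rule Y_has_derivative) simp
  have cW: "continuous_on {0..} W"
    by (rule DERIV_continuous_on, rule has_field_derivative_at_within, rule W_has_derivative) simp
  have "continuous_on {0..} (\<lambda>s. k\<^sup>2 * (Y s - a) + m\<^sup>2 * (b - Y s))"
    by (intro continuous_intros cY)
  moreover have "continuous_on {0..} (\<lambda>s. (m\<^sup>2 * (b - Y s)\<^sup>2 - k\<^sup>2 * (Y s - a)\<^sup>2) / W s)"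
    by (intro continuous_intros cY cW) (force dest: W_pos)
  moreover have "W s * ((m\<^sup>2 * (b - Y s)\<^sup>2 - k\<^sup>2 * (Y s - a)\<^sup>2) / W s)
      = m\<^sup>2 * (b - Y s)\<^sup>2 - k\<^sup>2 * (Y s - a)\<^sup>2" if "s \<ge> 0" for s
    using W_pos[OF that] by simp
  ultimately show ?thesis
    unfolding reduced_shock_solution_def
    using dW Y_has_derivative Y_bounds by (auto intro: has_field_derivative_at_within)
qed

end

lemma reduced_shock_solution_stationary:
  fixes k m a b :: real
  assumes "k > 0" and "m > 0" and "a < b"
  defines "c \<equiv> (k * a + m * b) / (k + m)"
  shows "reduced_shock_solution (m\<^sup>2) (k\<^sup>2) a b
           (\<lambda>s. k * m * (b - a) * s) (\<lambda>_. c) (\<lambda>_. k * m * (b - a)) (\<lambda>_. 0)"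
proof -
  have km: "k + m > 0"
    using assms(1,2) by simp
  have c_a: "(k + m) * (c - a) = m * (b - a)" and b_c: "(k + m) * (b - c) = k * (b - a)"
    using km by (simp_all add: c_def field_simps)
  have "0 < (k + m) * (c - a)" "0 < (k + m) * (b - c)"
    unfolding c_a b_c using assms by simp_all
  then have "a < c \<and> c < b"
    using km by (simp add: zero_less_mult_iff)
  moreover have "(k + m) * (k\<^sup>2 * (c - a) + m\<^sup>2 * (b - c)) = (k + m) * (k * m * (b - a))"
    using c_a b_c by algebra
  then have "k\<^sup>2 * (c - a) + m\<^sup>2 * (b - c) = k * m * (b - a)"
    using km by simp
  moreover have "(k + m)\<^sup>2 * (m\<^sup>2 * (b - c)\<^sup>2) = (k + m)\<^sup>2 * (k\<^sup>2 * (c - a)\<^sup>2)"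
    using c_a b_c by algebra
  then have "m\<^sup>2 * (b - c)\<^sup>2 = k\<^sup>2 * (c - a)\<^sup>2"
    using km by simp
  ultimately show ?thesis
    unfolding reduced_shock_solution_def by (auto intro!: derivative_eq_intros)
qed

lemma reduced_shock_ivp_solvable:
  fixes \<alpha>m \<alpha>p a b y0 \<omega>0 :: real
  assumes "\<alpha>m > 0" and "\<alpha>p > 0" and "a < y0" and "y0 < b" and "\<omega>0 \<ge> 0"
  shows "\<exists>W Y W' Y'. reduced_shock_solution \<alpha>m \<alpha>p a b W Y W' Y' \<and> W 0 = \<omega>0 \<and> W 0 * Y 0 = \<omega>0 * y0"
proof -
  define k m where "k = sqrt \<alpha>p" and "m = sqrt \<alpha>m"
  have km: "k > 0" "m > 0" "\<alpha>p = k\<^sup>2" "\<alpha>m = m\<^sup>2"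
    using assms(1,2) by (auto simp: k_def m_def)
  show ?thesis
  proof (cases "\<omega>0 = 0")
    case True
    then show ?thesis
      using reduced_shock_solution_stationary[of k m a b] km assms(3,4) by fastforce
  next
    case False
    then interpret reduced_shock_ivp k m a b y0 \<omega>0
      using km assms(3-5) by unfold_locales auto
    show ?thesis
      unfolding km(3,4)
      by (rule exI)+ (rule conjI[OF explicit_reduced_shock_solution], simp add: W_0 Y_0)
  qed
qed

theorem mainTheorem14:
  fixes \<mu> ua \<alpha>m \<alpha>p um up \<sigma>0 \<omega>0 :: real
  assumes "\<mu> > 0" and "\<alpha>m > 0" and "\<alpha>p > 0" and "um > up"
    and "up < \<sigma>0" and "\<sigma>0 < um" and "\<omega>0 \<ge> 0"
  shows "\<exists>(\<omega>::real \<Rightarrow> real) (\<sigma>::real \<Rightarrow> real) \<omega>' \<sigma>'.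
    (\<forall>t\<ge>0. (\<omega> has_real_derivative \<omega>' t) (at t within {0..})
            \<and> (\<sigma> has_real_derivative \<sigma>' t) (at t within {0..}))
    \<and> continuous_on {0..} \<omega>' \<and> continuous_on {0..} \<sigma>'
    \<and> (\<forall>t\<ge>0. \<omega>' t = (\<alpha>p - \<alpha>m) * \<sigma> t
                 - (\<alpha>p * ustate ua up \<mu> t - \<alpha>m * ustate ua um \<mu> t))
    \<and> (\<forall>t\<ge>0. ((\<lambda>s. \<omega> s * \<sigma> s) has_real_derivative
           ((\<alpha>p * ustate ua up \<mu> t - \<alpha>m * ustate ua um \<mu> t) * \<sigma> t
            - (\<alpha>p * (ustate ua up \<mu> t)\<^sup>2 - \<alpha>m * (ustate ua um \<mu> t)\<^sup>2)
            + \<mu> * (ua - \<sigma> t) * \<omega> t)) (at t within {0..}))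
    \<and> \<omega> 0 = \<omega>0 \<and> \<sigma> 0 * \<omega> 0 = \<sigma>0 * \<omega>0
    \<and> (\<forall>t\<ge>0. ustate ua up \<mu> t < \<sigma> t \<and> \<sigma> t < ustate ua um \<mu> t)"
proof -
  obtain W Y W' Y' where "reduced_shock_solution \<alpha>m \<alpha>p (up - ua) (um - ua) W Y W' Y'"
    and "W 0 = \<omega>0" and "W 0 * Y 0 = \<omega>0 * (\<sigma>0 - ua)"
    using reduced_shock_ivp_solvable[of \<alpha>m \<alpha>p "up - ua" "\<sigma>0 - ua" "um - ua" \<omega>0] assms
    by auto
  from lax_shock_solution_of_reduced[OF assms(1) this]
  have "\<exists>\<omega> \<sigma> \<omega>' \<sigma>'. lax_shock_solution \<mu> ua \<alpha>m \<alpha>p um up \<sigma>0 \<omega>0 \<omega> \<sigma> \<omega>' \<sigma>'"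
    by blast
  then show ?thesis
    unfolding lax_shock_solution_def .
qed

end
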